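(* Let $p>3$ be a prime, $\zeta=e^{2\pi i/p}$, $K=\mathbb{Q}(\zeta)$, and let $x,y,z\in\mathbb{Z}\setminus\{0\}$ be coprime with $x^p+y^p+z^p=0$ and $p\mid y$. Let $q\ne p$ be a prime and $\mathfrak{q}_K$ a prime ideal of $\mathbb{Z}_K$ above $q$. Then for $k=1,\dots,p-2$: (i) if $\mathfrak{q}_K\mid x\zeta-y$ then $\big(\frac{x+\zeta^k y}{\mathfrak{q}_K}\big)_K=\big(\frac{\zeta^{k/2}}{\mathfrak{q}_K}\big)_K\big(\frac{\epsilon_{k+1}}{\mathfrak{q}_K}\big)_K$; (ii) if $\mathfrak{q}_K\mid z\zeta-y$ then $\big(\frac{z+\zeta^k y}{\mathfrak{q}_K}\big)_K=\big(\frac{\zeta^{k/2}}{\mathfrak{q}_K}\big)_K\big(\frac{\epsilon_{k+1}}{\mathfrak{q}_K}\big)_K$; (iii) if $\mathfrak{q}_K\mid x\zeta-z$ then $\big(\frac{x+\zeta^k z}{\mathfrak{q}_K}\big)_K\big(\frac{p}{\mathfrak{q}_K}\big)_K=\big(\frac{\zeta^{k/2}}{\mathfrak{q}_K}\big)_K\big(\frac{\epsilon_{k+1}}{\mathfrak{q}_K}\big)_K$.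
   Context: Exponents of $\zeta$ are read modulo $p$, with $1/2$ denoting the inverse of $2$ modulo $p$. For $1\le a\le p-1$, $\epsilon_a=\zeta^{(1-a)/2}\cdot\frac{1+\zeta^a}{1+\zeta}$ (a real cyclotomic unit; $\epsilon_1=1$). For a prime ideal $\mathfrak{P}$ of $\mathbb{Z}_K$ not above $p$ and $\alpha\in K$ prime to $\mathfrak{P}$, $(\alpha/\mathfrak{P})_K$ is the unique $\zeta^\mu$ with $\alpha^{(N\mathfrak{P}-1)/p}\equiv\zeta^\mu\pmod{\mathfrak{P}}$, $N\mathfrak{P}=|\mathbb{Z}_K/\mathfrak{P}|$. *)

theory Defs
  imports "HOL-Computational_Algebra.Computational_Algebra" "HOL-Algebra.QuotRing"
begin

definition zeta :: "nat \<Rightarrow> complex" where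
  "zeta p = cis (2 * pi / real p)"

definition cyc_field :: "nat \<Rightarrow> complex set" where
  "cyc_field p = {a. \<exists>f :: rat poly. a = poly (map_poly of_rat f) (zeta p)}"

definition ZK :: "nat \<Rightarrow> complex set" where
  "ZK p = {a \<in> cyc_field p. algebraic_int a}"

definition ZK_ring :: "nat \<Rightarrow> complex ring" where
  "ZK_ring p = \<lparr>carrier = ZK p, monoid.mult = (*), one = 1, zero = 0, add = (+)\<rparr>"

definition ideal_norm :: "nat \<Rightarrow> complex set \<Rightarrow> nat" where
  "ideal_norm p P = card (carrier (ZK_ring p Quot P))"

definition pres :: "nat \<Rightarrow> complex set \<Rightarrow> complex \<Rightarrow> complex" where
  "pres p P a = (THE w. (\<exists>\<mu>::nat. w = zeta p ^ \<mu>) \<and>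
                        a ^ ((ideal_norm p P - 1) div p) - w \<in> P)"

(* zeta^(k/2), with 1/2 the inverse of 2 mod p, namely (p+1)/2 *)
definition zeta_half :: "nat \<Rightarrow> nat \<Rightarrow> complex" where
  "zeta_half p k = zeta p ^ (k * ((p + 1) div 2))"

definition eps :: "nat \<Rightarrow> nat \<Rightarrow> complex" where
  "eps p a = zeta p powi ((1 - int a) * int ((p + 1) div 2)) *
             (1 + zeta p ^ a) / (1 + zeta p)"

end

theory Submission
  imports Defs "HOL-Computational_Algebra.Nth_Powers" "HOL-Number_Theory.Cong"
    "HOL-Algebra.Multiplicative_Group" "HOL-Computational_Algebra.Fundamental_Theorem_Algebra"
begin

text \<open>Let \<open>(a, b)\<close> be one of \<open>(x, y)\<close>, \<open>(z, y)\<close>, \<open>(x, z)\<close> with \<open>b \<equiv> a \<zeta>\<close> modulo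
  \<open>P\<close>. Then \<open>a + \<zeta>\<^sup>k b \<equiv> a (1 + \<zeta>\<^bsup>k+1\<^esup>)\<close> and \<open>a + b \<equiv> a (1 + \<zeta>)\<close>, so
  \<open>a + \<zeta>\<^sup>k b \<equiv> (a + b) (1 + \<zeta>\<^bsup>k+1\<^esup>) / (1 + \<zeta>) = (a + b) \<zeta>\<^bsup>k/2\<^esup> \<epsilon>\<^sub>k\<^sub>+\<^sub>1\<close>.
  The residue symbol is multiplicative and depends only on the class modulo \<open>P\<close> (Euler's
  criterion in the finite field \<open>\<int>\<^sub>K / P\<close>, in which the \<open>p\<close>-th roots of unity stay distinct
  because \<open>q \<noteq> p\<close>), so it remains to see that the symbol of \<open>a + b\<close>, resp. of \<open>p (a + b)\<close>,
  is trivial. This comes from the Fermat equation: since \<open>p | y\<close>, the integers \<open>x + y\<close> and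
  \<open>z + y\<close> are coprime to their cofactors in \<open>x\<^sup>p + y\<^sup>p\<close> and \<open>z\<^sup>p + y\<^sup>p\<close>, hence are
  \<open>p\<close>-th powers, and likewise \<open>p (x + z)\<close> is a \<open>p\<close>-th power.\<close>

section \<open>Roots of unity\<close>

lemma zeta_pow_p: "p > 0 \<Longrightarrow> zeta p ^ p = 1"
  unfolding zeta_def by (simp add: DeMoivre)

lemma zeta_pow_eq_1: "p dvd n \<Longrightarrow> zeta p ^ n = 1"
  by (cases "p = 0") (auto simp: power_mult zeta_pow_p)

lemma zeta_pow_mod: "p > 0 \<Longrightarrow> zeta p ^ (n mod p) = zeta p ^ n"
  by (metis zeta_pow_eq_1 dvd_triv_left mult_div_mod_eq mult_1 power_add)

lemma zeta_neq_1: "p > 1 \<Longrightarrow> zeta p \<noteq> 1"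
proof
  assume "p > 1" and "zeta p = 1"
  then have "cos (2 * pi / real p) = 1" by (simp add: zeta_def complex_eq_iff)
  moreover have "2 * pi / real p \<le> pi" using \<open>p > 1\<close> by (simp add: field_simps)
  then have "cos (2 * pi / real p) < cos 0"
    using \<open>p > 1\<close> by (intro cos_monotone_0_pi) auto
  ultimately show False by simp
qed

lemma sum_zeta_powers: "p > 1 \<Longrightarrow> (\<Sum>j<p. zeta p ^ j) = 0"
  using zeta_neq_1[of p] zeta_pow_p[of p] by (simp add: geometric_sum)

lemma zeta_in_ZK: "p > 0 \<Longrightarrow> zeta p \<in> ZK p"
proof -
  assume "p > 0"
  have "zeta p = poly (map_poly of_rat [:0, 1:]) (zeta p)" by (simp add: map_poly_pCons)
  then have "zeta p \<in> cyc_field p" unfolding cyc_field_def by blast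
  moreover have "algebraic_int (zeta p)"
    by (rule algebraic_int_root[of 1 "Polynomial.monom 1 p"])
      (use \<open>p > 0\<close> zeta_pow_p in \<open>auto simp: poly_monom degree_monom_eq\<close>)
  ultimately show ?thesis unfolding ZK_def by simp
qed

lemma root_of_unity_eq_zeta_pow:
  assumes "p > 0" and "w ^ p = 1"
  shows "\<exists>k. w = zeta p ^ k"
proof -
  obtain k where "w = cis (2 * pi * real k / real p)"
    using bij_betw_roots_unity[OF assms(1)] assms(2) by (auto simp: bij_betw_def)
  also have "\<dots> = zeta p ^ k" unfolding zeta_def DeMoivre by (simp add: field_simps)
  finally show ?thesis ..
qed

lemma inverse_zeta_pow: "p > 0 \<Longrightarrow> inverse (zeta p ^ n) = zeta p ^ ((p - 1) * n)"
proof (rule inverse_unique)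
  assume "p > 0"
  then show "zeta p ^ n * zeta p ^ ((p - 1) * n) = 1"
    by (simp add: power_add[symmetric] zeta_pow_eq_1 algebra_simps)
qed

lemma pow_minus_one_factor:
  assumes "p > 0"
  shows "\<exists>m. \<forall>w :: complex. w ^ p - 1 = (\<Prod>z\<in>{z. z ^ p = 1}. (w - z) ^ m z)"
proof -
  define f :: "complex poly" where "f = Polynomial.monom 1 p - 1"
  have "degree f = p" unfolding f_def using assms
    by (simp only: diff_conv_add_uminus, subst degree_add_eq_left) (auto simp: degree_monom_eq)
  then have "lead_coeff f = 1" using assms by (simp add: f_def)
  moreover have "poly f w = w ^ p - 1" for w by (simp add: f_def poly_monom)
  ultimately have "w ^ p - 1 = (\<Prod>z\<in>{z. z ^ p = 1}. (w - z) ^ Polynomial.order z f)" for w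
    using arg_cong[OF complex_poly_decompose[of f], of "\<lambda>g. poly g w"] by (simp add: poly_prod)
  then show ?thesis by (intro exI[where x = "\<lambda>z. Polynomial.order z f"] allI)
qed

lemma eps_add_one_eq:
  "eps p (k + 1) = inverse (zeta_half p k) * ((1 + zeta p ^ (k + 1)) / (1 + zeta p))"
proof -
  have "(1 - int (k + 1)) * int ((p + 1) div 2) = - int (k * ((p + 1) div 2))" by simp
  then show ?thesis
    unfolding eps_def zeta_half_def by (simp only: power_int_minus power_int_of_nat) simp
qed

lemma one_plus_zeta_pow_eq:
  assumes "odd p"
  shows "\<exists>c. 1 + zeta p ^ m = (1 + zeta p) * (\<Sum>j<c. (- zeta p) ^ j)"
proof -
  define c where "c = (if odd m then m else m + p)"
  have "odd c" using assms by (simp add: c_def)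
  moreover have "zeta p ^ c = zeta p ^ m"
    using assms by (auto simp: c_def power_add zeta_pow_eq_1)
  moreover have "1 - (- zeta p) ^ c = (1 - (- zeta p)) * (\<Sum>j<c. (- zeta p) ^ j)"
    by (rule one_diff_power_eq)
  ultimately show ?thesis by auto
qed

lemma (in domain) finite_pow_card_minus_one:
  assumes "finite (carrier R)" and "x \<in> carrier R" and "x \<noteq> \<zero>"
  shows "x [^] (card (carrier R) - 1) = \<one>"
proof -
  have "y \<in> Units R" if y: "y \<in> carrier R - {\<zero>}" for y
  proof -
    have "inj_on (\<lambda>c. y \<otimes> c) (carrier R)"
      using y m_lcancel by (auto simp: inj_on_def)
    then have "(\<lambda>c. y \<otimes> c) ` carrier R = carrier R"
      using assms(1) y by (intro endo_inj_surj) auto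
    then obtain c where "c \<in> carrier R" "y \<otimes> c = \<one>" by (metis imageE one_closed)
    then show ?thesis using y m_comm unfolding Units_def by auto
  qed
  then interpret field R by (intro field_intro2) auto
  have "x [^]\<^bsub>mult_of R\<^esub> order (mult_of R) = \<one>\<^bsub>mult_of R\<^esub>"
    using assms(2,3) by (intro group.pow_order_eq_1 field_mult_group) simp
  moreover have "order (mult_of R) = card (carrier R) - 1"
    using order_mult_of[OF assms(1)] by (simp add: order_def)
  ultimately show ?thesis by (simp add: nat_pow_mult_of)
qed

section \<open>The Fermat equation over the integers\<close>

lemma coprime_if_no_common_prime_int:
  fixes a b :: int
  assumes "\<And>r. prime r \<Longrightarrow> r dvd a \<Longrightarrow> r dvd b \<Longrightarrow> False"
  shows "coprime a b"
proof (rule ccontr)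
  assume "\<not> coprime a b"
  then obtain c where c: "c dvd a" "c dvd b" "\<not> is_unit c" by (rule not_coprimeE)
  then obtain r where "prime r" "r dvd c" using prime_factor_int[of c] by auto
  then show False using assms c dvd_trans by blast
qed

lemma coprime_mult_eq_odd_power:
  fixes a b c :: int
  assumes "coprime a b" and "a * b = c ^ n" and "odd n"
  shows "\<exists>t. a = t ^ n"
proof -
  have "nat \<bar>a\<bar> * nat \<bar>b\<bar> = nat \<bar>c\<bar> ^ n"
    using assms(2) by (simp add: nat_abs_mult_distrib[symmetric] power_abs nat_power_eq)
  then have "is_nth_power n (nat \<bar>a\<bar>)"
    using is_nth_power_mult_coprime_nat_iff[of "nat \<bar>a\<bar>" "nat \<bar>b\<bar>"] assms(1) by auto
  then obtain t where "\<bar>a\<bar> = int t ^ n"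
    by (auto elim!: is_nth_powerE) (metis abs_ge_zero int_nat_eq of_nat_power)
  then have "a = int t ^ n \<or> a = (- int t) ^ n"
    using assms(3) by (auto simp: abs_if split: if_splits)
  then show ?thesis by blast
qed

definition binom_middle_sum :: "nat \<Rightarrow> int \<Rightarrow> int \<Rightarrow> int" where
  "binom_middle_sum n s x = (\<Sum>i\<in>{2..<n}. int (n choose i) * s ^ (i - 1) * (- x) ^ (n - i))"

lemma pow_add_diff_pow_eq:
  fixes s x :: int
  assumes "odd n" and "n \<ge> 3"
  shows "x ^ n + (s - x) ^ n = s * (int n * x ^ (n - 1) + binom_middle_sum n s x + s ^ (n - 1))"
proof -
  define T where "T i = int (n choose i) * s ^ i * (- x) ^ (n - i)" for i
  have "(s - x) ^ n = (\<Sum>i\<le>n. T i)"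
    using binomial_ring[of s "- x" n] by (simp add: T_def)
  also have "\<dots> = T 0 + T 1 + (\<Sum>i\<in>{2..<n}. T i) + T n"
  proof -
    have "{..n} = insert 0 (insert 1 (insert n {2..<n}))" using assms(2) by auto
    then show ?thesis using assms(2) by (simp add: algebra_simps)
  qed
  finally have "(s - x) ^ n = T 0 + T 1 + (\<Sum>i\<in>{2..<n}. T i) + T n" .
  moreover have "(\<Sum>i\<in>{2..<n}. T i) = s * binom_middle_sum n s x"
    unfolding binom_middle_sum_def sum_distrib_left
    by (rule sum.cong) (auto simp: T_def power_eq_if)
  moreover have "T 0 = - (x ^ n)" using assms(1) by (simp add: T_def)
  moreover have "T 1 = s * (int n * x ^ (n - 1))" using assms by (simp add: T_def)
  moreover have "T n = s * s ^ (n - 1)" using assms(2) by (simp add: T_def power_eq_if)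
  ultimately show ?thesis by (simp add: algebra_simps)
qed

lemma dvd_binom_middle_sum: "s dvd binom_middle_sum n s x"
  unfolding binom_middle_sum_def by (intro dvd_sum) (auto intro!: dvd_mult2 dvd_mult dvd_power)

lemma prime_dvd_binom_middle_sum: "prime p \<Longrightarrow> int p dvd binom_middle_sum p s x"
  unfolding binom_middle_sum_def by (intro dvd_sum) (auto intro!: dvd_mult2 dvd_choose_prime)

lemma prime_sq_dvd_binom_middle_sum:
  assumes "prime p" and "int p dvd s"
  shows "int p ^ 2 dvd binom_middle_sum p s x"
  unfolding binom_middle_sum_def
proof (intro dvd_sum)
  fix i assume i: "i \<in> {2..<p}"
  then have "int p dvd int (p choose i)" using assms(1) by (auto intro: dvd_choose_prime)
  moreover have "int p dvd s ^ (i - 1)" using i assms(2) by (auto intro: dvd_power_iff_le dvd_trans[OF _ dvd_power])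
  ultimately show "int p ^ 2 dvd int (p choose i) * s ^ (i - 1) * (- x) ^ (p - i)"
    by (simp add: power2_eq_square mult_dvd_mono)
qed

lemma prime_dvd_sum_and_quotient:
  fixes a b r :: int
  assumes "prime p" and "p \<ge> 2" and "prime r" and "coprime a b"
    and "r dvd a + b"
    and "r dvd int p * a ^ (p - 1) + binom_middle_sum p (a + b) a + (a + b) ^ (p - 1)"
  shows "r = int p"
proof -
  have "r dvd binom_middle_sum p (a + b) a + (a + b) ^ (p - 1)"
  proof (rule dvd_add)
    show "r dvd binom_middle_sum p (a + b) a" using assms(5) dvd_binom_middle_sum dvd_trans by blast
    show "r dvd (a + b) ^ (p - 1)" using assms(2) by (intro dvd_trans[OF assms(5) dvd_power]) auto
  qed
  then have "r dvd int p * a ^ (p - 1)"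
    using assms(6) by (simp add: dvd_add_left_iff add.assoc)
  then have "r dvd int p \<or> r dvd a"
    using assms(3) by (auto simp: prime_dvd_mult_iff dest: prime_dvd_power)
  moreover have "\<not> r dvd a"
  proof
    assume "r dvd a"
    then have "r dvd b" using assms(5) by (simp add: dvd_add_right_iff)
    then show False using \<open>r dvd a\<close> assms(3,4) not_coprimeI not_prime_unit by blast
  qed
  ultimately show ?thesis
    using assms(1,3) by (metis prime_nat_int_transfer primes_dvd_imp_eq)
qed

lemma odd_prime_ge_3: "prime p \<Longrightarrow> odd p \<Longrightarrow> p \<ge> (3 :: nat)"
  using prime_ge_2_nat[of p] by (cases "p = 2") auto

lemma fermat_eq_factor:
  fixes a b c :: int
  assumes "odd p" and "p \<ge> 3" and "a ^ p + b ^ p + c ^ p = 0"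
  shows "(a + b) * (int p * a ^ (p - 1) + binom_middle_sum p (a + b) a + (a + b) ^ (p - 1)) = (- c) ^ p"
  using pow_add_diff_pow_eq[OF assms(1,2), of a "a + b"] assms(1,3)
  by (simp add: eq_neg_iff_add_eq_0 add.commute)

lemma fermat_eq_sum_is_pth_power:
  fixes a b c :: int
  assumes "prime p" and "odd p" and "a ^ p + b ^ p + c ^ p = 0"
    and "int p dvd b" and "coprime a b"
  shows "\<exists>t. a + b = t ^ p"
proof -
  define Q where "Q = int p * a ^ (p - 1) + binom_middle_sum p (a + b) a + (a + b) ^ (p - 1)"
  have "p \<ge> 3" using assms(1,2) by (rule odd_prime_ge_3)
  have "coprime (a + b) Q"
  proof (rule coprime_if_no_common_prime_int)
    fix r assume r: "prime r" "r dvd a + b" "r dvd Q"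
    then have "r = int p"
      using prime_dvd_sum_and_quotient[OF assms(1) _ r(1) assms(5) r(2)] \<open>p \<ge> 3\<close> by (simp add: Q_def)
    then have "int p dvd a" using r(2) assms(4) by (simp add: dvd_add_left_iff)
    then show False
      using assms(1,4,5) not_coprimeI[of "int p" a b] not_prime_unit by auto
  qed
  then show ?thesis
    using coprime_mult_eq_odd_power fermat_eq_factor[OF assms(2) \<open>p \<ge> 3\<close> assms(3)] assms(2)
    unfolding Q_def by blast
qed

lemma fermat_eq_prime_dvd_sum:
  fixes a b c :: int
  assumes "prime p" and "odd p" and "a ^ p + b ^ p + c ^ p = 0" and "int p dvd c"
  shows "int p dvd a + b"
proof -
  define Q where "Q = int p * a ^ (p - 1) + binom_middle_sum p (a + b) a + (a + b) ^ (p - 1)"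
  have "p \<ge> 3" using assms(1,2) by (rule odd_prime_ge_3)
  have "int p dvd (- c) ^ p" using assms(4) \<open>p \<ge> 3\<close> by (intro dvd_trans[OF _ dvd_power[of p]]) auto
  then have "int p dvd (a + b) * Q"
    using fermat_eq_factor[OF assms(2) \<open>p \<ge> 3\<close> assms(3)] by (simp add: Q_def)
  moreover have "int p dvd Q - (a + b) ^ (p - 1)"
    using prime_dvd_binom_middle_sum[OF assms(1)] by (simp add: Q_def)
  then have "int p dvd Q \<Longrightarrow> int p dvd (a + b) ^ (p - 1)"
    using dvd_diff[of "int p" Q "Q - (a + b) ^ (p - 1)"] by simp
  moreover have "prime (int p)" using assms(1) by simp
  ultimately show ?thesis using prime_dvd_mult_iff prime_dvd_power by blast
qed

text \<open>Here \<open>p\<close> divides \<open>a + b\<close> and exactly once the cofactor \<open>Q\<close> of \<open>a\<^sup>p + b\<^sup>p\<close>,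
  so \<open>p (a + b)\<close> and \<open>Q / p\<close> are coprime.\<close>

lemma fermat_eq_p_times_sum_is_pth_power:
  fixes a b c :: int
  assumes "prime p" and "odd p" and "a ^ p + b ^ p + c ^ p = 0"
    and "int p dvd c" and "coprime a b" and "coprime a c"
  shows "\<exists>t. int p * (a + b) = t ^ p"
proof -
  define M where "M = binom_middle_sum p (a + b) a"
  define Q where "Q = int p * a ^ (p - 1) + M + (a + b) ^ (p - 1)"
  have "p \<ge> 3" using assms(1,2) by (rule odd_prime_ge_3)
  have pp: "prime (int p)" using assms(1) by simp
  have "\<not> int p dvd a"
    using assms(1,4,6) not_coprimeI[of "int p" a c] not_prime_unit by auto
  have sum: "int p dvd a + b" using fermat_eq_prime_dvd_sum[OF assms(1-4)] .
  then have "int p ^ 2 dvd (a + b) ^ 2" by (rule dvd_power_same)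
  also have "\<dots> dvd (a + b) ^ (p - 1)" using \<open>p \<ge> 3\<close> by (intro le_imp_power_dvd) auto
  finally have "int p ^ 2 dvd M + (a + b) ^ (p - 1)"
    using prime_sq_dvd_binom_middle_sum[OF assms(1) sum] by (simp add: M_def)
  then obtain R where R: "M + (a + b) ^ (p - 1) = int p ^ 2 * R" unfolding dvd_def by blast
  define R' where "R' = a ^ (p - 1) + int p * R"
  have Q: "Q = int p * R'" unfolding Q_def R'_def add.assoc R by (simp add: algebra_simps power2_eq_square)
  have "\<not> int p dvd R'"
  proof
    assume "int p dvd R'"
    then have "int p dvd a ^ (p - 1)" by (simp add: R'_def dvd_add_left_iff)
    then show False using pp \<open>\<not> int p dvd a\<close> prime_dvd_power by blast
  qed
  have "coprime (int p * (a + b)) R'"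
  proof (rule coprime_if_no_common_prime_int)
    fix r assume r: "prime r" "r dvd int p * (a + b)" "r dvd R'"
    have "r = int p"
    proof (cases "r dvd a + b")
      case True
      have "r dvd Q" using r(3) by (simp add: Q)
      then show ?thesis
        using prime_dvd_sum_and_quotient[OF assms(1) _ r(1) assms(5) True] \<open>p \<ge> 3\<close>
        by (simp add: Q_def M_def)
    next
      case False
      then have "r dvd int p" using r(1,2) by (simp add: prime_dvd_mult_iff)
      then show ?thesis using r(1) pp primes_dvd_imp_eq by blast
    qed
    then show False using r(3) \<open>\<not> int p dvd R'\<close> by simp
  qed
  moreover have "(a + b) * Q = (- c) ^ p"
    using fermat_eq_factor[OF assms(2) \<open>p \<ge> 3\<close> assms(3)] by (simp add: Q_def M_def)
  then have "int p * (a + b) * R' = (- c) ^ p" by (simp add: Q ac_simps)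
  ultimately show ?thesis using coprime_mult_eq_odd_power assms(2) by blast
qed

section \<open>Prime ideals of \<open>\<int>\<^sub>K\<close> above \<open>q \<noteq> p\<close>\<close>

locale prime_ideal_over_q =
  fixes p q :: nat and P :: "complex set"
  assumes prime_p: "prime p" and odd_p: "odd p"
    and prime_ideal: "primeideal P (ZK_ring p)"
    and prime_q: "prime q" and q_neq_p: "q \<noteq> p" and q_in_P: "of_nat q \<in> P"

sublocale prime_ideal_over_q \<subseteq> I: primeideal P "ZK_ring p"
  by (rule prime_ideal)

context prime_ideal_over_q
begin

lemma p_pos: "p > 0" and p_gt_1: "p > 1"
  using prime_gt_1_nat[OF prime_p] by simp_all

text \<open>Closure of \<open>ZK p\<close> under sums and products (i.e. of the algebraic integers) is not
  proved from scratch: it is inherited from the ring structure of \<open>ZK_ring p\<close> that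
  \<open>primeideal P (ZK_ring p)\<close> presupposes.\<close>

lemma ZK_mult: "a \<in> ZK p \<Longrightarrow> b \<in> ZK p \<Longrightarrow> a * b \<in> ZK p"
  using I.m_closed[of a b] by (simp add: ZK_ring_def)

lemma ZK_add: "a \<in> ZK p \<Longrightarrow> b \<in> ZK p \<Longrightarrow> a + b \<in> ZK p"
  using I.add.m_closed[of a b] by (simp add: ZK_ring_def)

lemma ZK_one: "1 \<in> ZK p"
  using I.one_closed by (simp add: ZK_ring_def)

lemma ZK_zero: "0 \<in> ZK p"
  using I.zero_closed by (simp add: ZK_ring_def)

lemma a_inv_eq_uminus: "a \<in> ZK p \<Longrightarrow> \<ominus>\<^bsub>ZK_ring p\<^esub> a = - a"
  using I.r_neg[of a] by (simp add: ZK_ring_def eq_neg_iff_add_eq_0 add.commute)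

lemma ZK_uminus: "a \<in> ZK p \<Longrightarrow> - a \<in> ZK p"
  using I.a_inv_closed[of a] a_inv_eq_uminus[of a] by (simp add: ZK_ring_def)

lemma ZK_diff: "a \<in> ZK p \<Longrightarrow> b \<in> ZK p \<Longrightarrow> a - b \<in> ZK p"
  using ZK_add[of a "- b"] ZK_uminus[of b] by simp

lemma ZK_power: "a \<in> ZK p \<Longrightarrow> a ^ n \<in> ZK p"
  by (induction n) (auto intro: ZK_mult ZK_one)

lemma ZK_of_nat: "of_nat n \<in> ZK p"
  by (induction n) (auto intro: ZK_add ZK_one ZK_zero)

lemma ZK_of_int: "of_int n \<in> ZK p"
  by (cases n rule: int_cases) (auto intro: ZK_of_nat ZK_uminus simp del: of_nat_Suc)

lemma ZK_sum: "(\<And>i. i \<in> S \<Longrightarrow> f i \<in> ZK p) \<Longrightarrow> sum f S \<in> ZK p"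
  by (induction S rule: infinite_finite_induct) (auto intro: ZK_add ZK_zero)

lemma ZK_prod: "(\<And>i. i \<in> S \<Longrightarrow> f i \<in> ZK p) \<Longrightarrow> prod f S \<in> ZK p"
  by (induction S rule: infinite_finite_induct) (auto intro: ZK_mult ZK_one)

lemma ZK_zeta: "zeta p \<in> ZK p"
  using p_pos by (rule zeta_in_ZK)

lemma ZK_zeta_pow: "zeta p ^ n \<in> ZK p"
  using ZK_zeta by (rule ZK_power)

lemma P_subset_ZK: "a \<in> P \<Longrightarrow> a \<in> ZK p"
  using I.a_subset by (auto simp: ZK_ring_def)

lemma P_zero: "0 \<in> P"
  using additive_subgroup.zero_closed[OF I.is_additive_subgroup] by (simp add: ZK_ring_def)

lemma P_add: "a \<in> P \<Longrightarrow> b \<in> P \<Longrightarrow> a + b \<in> P"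
  using additive_subgroup.a_closed[OF I.is_additive_subgroup, of a b] by (simp add: ZK_ring_def)

lemma P_uminus: "a \<in> P \<Longrightarrow> - a \<in> P"
  using additive_subgroup.a_inv_closed[OF I.is_additive_subgroup, of a]
    a_inv_eq_uminus[OF P_subset_ZK] by simp

lemma P_diff: "a \<in> P \<Longrightarrow> b \<in> P \<Longrightarrow> a - b \<in> P"
  using P_add[of a "- b"] P_uminus[of b] by simp

lemma P_diff_commute: "a - b \<in> P \<Longrightarrow> b - a \<in> P"
  using P_uminus[of "a - b"] by simp

lemma P_mult_left: "a \<in> P \<Longrightarrow> x \<in> ZK p \<Longrightarrow> x * a \<in> P"
  using I.I_l_closed[of a x] by (simp add: ZK_ring_def)

lemma P_mult_right: "a \<in> P \<Longrightarrow> x \<in> ZK p \<Longrightarrow> a * x \<in> P"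
  using P_mult_left[of a x] by (simp add: mult.commute)

lemma P_prime: "a \<in> ZK p \<Longrightarrow> b \<in> ZK p \<Longrightarrow> a * b \<in> P \<Longrightarrow> a \<in> P \<or> b \<in> P"
  using I.I_prime[of a b] by (simp add: ZK_ring_def)

lemma one_notin_P: "1 \<notin> P"
proof
  assume "1 \<in> P"
  then have "carrier (ZK_ring p) = P"
    using P_mult_left[of 1] P_subset_ZK by (force simp: ZK_ring_def)
  then show False using I.I_notcarr by simp
qed

lemma P_sum: "(\<And>i. i \<in> S \<Longrightarrow> f i \<in> P) \<Longrightarrow> sum f S \<in> P"
  by (induction S rule: infinite_finite_induct) (auto intro: P_add P_zero)

lemma P_prod_imp_factor:
  "finite S \<Longrightarrow> (\<And>i. i \<in> S \<Longrightarrow> f i \<in> ZK p) \<Longrightarrow> prod f S \<in> P \<Longrightarrow> \<exists>i\<in>S. f i \<in> P"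
proof (induction S rule: finite_induct)
  case (insert x F)
  then have "f x \<in> P \<or> prod f F \<in> P" using P_prime[of "f x" "prod f F"] ZK_prod[of F f] by simp
  then show ?case using insert by blast
qed (use one_notin_P in simp)

lemma P_power_imp: "a \<in> ZK p \<Longrightarrow> a ^ n \<in> P \<Longrightarrow> a \<in> P"
  by (induction n) (use one_notin_P P_prime ZK_power in auto)

lemma P_power: "a \<in> P \<Longrightarrow> n > 0 \<Longrightarrow> a ^ n \<in> P"
  using P_mult_right[OF _ ZK_power[OF P_subset_ZK]] by (cases n) auto

lemma power_diff_in_P: "a \<in> ZK p \<Longrightarrow> b \<in> ZK p \<Longrightarrow> a - b \<in> P \<Longrightarrow> a ^ n - b ^ n \<in> P"
proof (induction n)
  case (Suc n)
  have "a ^ Suc n - b ^ Suc n = a * (a ^ n - b ^ n) + b ^ n * (a - b)" by (simp add: algebra_simps)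
  then show ?case using Suc P_add P_mult_left ZK_power by simp
qed (simp add: P_zero)


lemma coprime_int_notin_P: "coprime m n \<Longrightarrow> of_int m \<in> P \<Longrightarrow> of_int n \<notin> P"
proof
  assume "coprime m n" and m: "of_int m \<in> P" and n: "of_int n \<in> P"
  then obtain u v where "u * m + v * n = 1" by (metis bezout_int coprime_iff_gcd_eq_1)
  then have "(1 :: complex) = of_int u * of_int m + of_int v * of_int n"
    by (metis of_int_1 of_int_add of_int_mult)
  also have "\<dots> \<in> P" using m n by (intro P_add P_mult_left ZK_of_int)
  finally show False using one_notin_P by simp
qed

lemma of_nat_p_notin_P: "of_nat p \<notin> P"
proof -
  have "coprime (int q) (int p)" using prime_p prime_q q_neq_p primes_coprime by auto
  then show ?thesis using coprime_int_notin_P[of "int q" "int p"] q_in_P by simp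
qed

lemma zeta_pow_notin_P: "zeta p ^ n \<notin> P"
proof
  assume "zeta p ^ n \<in> P"
  then have "(zeta p ^ n) ^ p \<in> P" using P_power p_pos by blast
  moreover have "(zeta p ^ n) ^ p = 1"
    unfolding power_mult[symmetric] by (rule zeta_pow_eq_1) simp
  ultimately show False using one_notin_P by simp
qed

text \<open>This is where \<open>q \<noteq> p\<close> enters: it keeps the \<open>p\<close>-th roots of unity distinct modulo \<open>P\<close>.\<close>

lemma one_minus_zeta_notin_P: "1 - zeta p \<notin> P"
proof
  assume h: "1 - zeta p \<in> P"
  have "1 - zeta p ^ j \<in> P" for j
    using P_mult_right[OF h ZK_sum[OF ZK_zeta_pow]] one_diff_power_eq[of "zeta p" j] by simp
  then have "(\<Sum>j<p. 1 - zeta p ^ j) \<in> P" by (intro P_sum)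
  moreover have "(\<Sum>j<p. 1 - zeta p ^ j) = of_nat p"
    using sum_zeta_powers[OF p_gt_1] by (simp add: sum_subtractf)
  ultimately show False using of_nat_p_notin_P by simp
qed

lemma one_minus_zeta_pow_notin_P:
  assumes "\<not> p dvd m"
  shows "1 - zeta p ^ m \<notin> P"
proof
  assume h: "1 - zeta p ^ m \<in> P"
  have "coprime m p" using prime_imp_coprime[OF prime_p assms] by (simp add: ac_simps)
  then obtain x where "[m * x = 1] (mod p)" using cong_solve_coprime_nat by auto
  then have "(zeta p ^ m) ^ x = zeta p"
    using zeta_pow_mod[OF p_pos, of "m * x"] p_gt_1 by (simp add: cong_def power_mult)
  moreover have "1 - (zeta p ^ m) ^ x \<in> P"
    using P_mult_right[OF h ZK_sum[OF ZK_power[OF ZK_zeta_pow]]] one_diff_power_eq[of "zeta p ^ m" x]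
    by simp
  ultimately show False using one_minus_zeta_notin_P by simp
qed

lemma one_plus_zeta_pow_notin_P:
  assumes "\<not> p dvd m"
  shows "1 + zeta p ^ m \<notin> P"
proof
  assume "1 + zeta p ^ m \<in> P"
  then have "(1 - zeta p ^ m) * (1 + zeta p ^ m) \<in> P"
    by (rule P_mult_left[OF _ ZK_diff[OF ZK_one ZK_zeta_pow]])
  moreover have "\<not> p dvd 2 * m"
  proof
    assume "p dvd 2 * m"
    then have "p dvd 2" using assms prime_dvd_mult_nat[OF prime_p] by blast
    then have "p \<le> 2" by (rule dvd_imp_le) simp
    then show False using odd_p p_gt_1 by presburger
  qed
  moreover have "(1 - zeta p ^ m) * (1 + zeta p ^ m) = 1 - zeta p ^ (2 * m)"
    by (simp add: algebra_simps power_mult power2_eq_square)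
  ultimately show False using one_minus_zeta_pow_notin_P by metis
qed

lemma zeta_pow_eq_if_diff_in_P:
  assumes "zeta p ^ a - zeta p ^ b \<in> P"
  shows "zeta p ^ a = zeta p ^ b"
proof -
  have *: "zeta p ^ m = zeta p ^ n" if "m \<le> n" "zeta p ^ n - zeta p ^ m \<in> P" for m n
  proof -
    have "zeta p ^ n - zeta p ^ m = - (zeta p ^ m * (1 - zeta p ^ (n - m)))"
      using \<open>m \<le> n\<close> by (simp add: algebra_simps power_add[symmetric])
    then have "zeta p ^ m * (1 - zeta p ^ (n - m)) \<in> P" using P_uminus that(2) by fastforce
    then have "1 - zeta p ^ (n - m) \<in> P"
      using P_prime ZK_zeta_pow ZK_diff ZK_one zeta_pow_notin_P by blast
    then have "zeta p ^ (n - m) = 1" using one_minus_zeta_pow_notin_P zeta_pow_eq_1 by blast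
    then show ?thesis using \<open>m \<le> n\<close> by (metis le_add_diff_inverse mult_1_right power_add)
  qed
  show ?thesis
  proof (cases "a \<le> b")
    case True
    then show ?thesis using *[of a b] P_diff_commute[OF assms] by simp
  next
    case False
    then show ?thesis using *[of b a] assms by simp
  qed
qed

subsection \<open>The power residue symbol\<close>

lemma rcos_eq_imp_diff_in_P:
  assumes "P +>\<^bsub>ZK_ring p\<^esub> b = P +>\<^bsub>ZK_ring p\<^esub> c"
  shows "b - c \<in> P"
proof -
  have "P +>\<^bsub>ZK_ring p\<^esub> a = (\<lambda>h. h + a) ` P" for a
    by (auto simp: a_r_coset_def r_coset_def ZK_ring_def)
  then have "b \<in> (\<lambda>h. h + c) ` P" using assms P_zero by (metis add_0 image_eqI)
  then show ?thesis by auto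
qed

lemma pow_norm_minus_one_in_P:
  assumes "finite (carrier (ZK_ring p Quot P))" and "a \<in> ZK p" and "a \<notin> P"
  shows "a ^ (ideal_norm p P - 1) - 1 \<in> P"
proof -
  let ?Q = "ZK_ring p Quot P" and ?h = "(+>\<^bsub>ZK_ring p\<^esub>) P"
  interpret h: ring_hom_ring "ZK_ring p" ?Q ?h by (rule I.rcos_ring_hom_ring)
  have a: "a \<in> carrier (ZK_ring p)" using assms(2) by (simp add: ZK_ring_def)
  have pow: "b [^]\<^bsub>ZK_ring p\<^esub> n = b ^ n" for b and n :: nat
    by (induction n) (simp_all add: ZK_ring_def)
  have "?h a \<noteq> \<zero>\<^bsub>?Q\<^esub>"
  proof
    assume "?h a = \<zero>\<^bsub>?Q\<^esub>"
    then have "?h a = ?h 0" using I.a_rcos_const[OF P_zero] by (simp add: FactRing_def ZK_ring_def)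
    then have "a - 0 \<in> P" by (rule rcos_eq_imp_diff_in_P)
    then show False using assms(3) by simp
  qed
  then have "?h a [^]\<^bsub>?Q\<^esub> (ideal_norm p P - 1) = \<one>\<^bsub>?Q\<^esub>"
    unfolding ideal_norm_def using a assms(1)
    by (intro domain.finite_pow_card_minus_one I.quotient_is_domain) auto
  then have "?h (a [^]\<^bsub>ZK_ring p\<^esub> (ideal_norm p P - 1)) = ?h \<one>\<^bsub>ZK_ring p\<^esub>"
    using h.hom_nat_pow[OF a] h.hom_one by simp
  then have "?h (a ^ (ideal_norm p P - 1)) = ?h 1" by (simp only: pow) (simp add: ZK_ring_def)
  then show ?thesis by (rule rcos_eq_imp_diff_in_P)
qed

lemma p_dvd_norm_minus_one:
  assumes "finite (carrier (ZK_ring p Quot P))"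
  shows "p dvd ideal_norm p P - 1"
proof -
  have "zeta p ^ (ideal_norm p P - 1) - 1 \<in> P"
    using pow_norm_minus_one_in_P[OF assms ZK_zeta_pow zeta_pow_notin_P[of 1]] by simp
  then show ?thesis using one_minus_zeta_pow_notin_P P_diff_commute by blast
qed

lemma congruent_zeta_pow_if_pth_power_one:
  assumes "b \<in> ZK p" and "b ^ p - 1 \<in> P"
  shows "\<exists>\<mu>. b - zeta p ^ \<mu> \<in> P"
proof -
  let ?S = "{z :: complex. z ^ p = 1}"
  obtain m where "b ^ p - 1 = (\<Prod>z\<in>?S. (b - z) ^ m z)"
    using pow_minus_one_factor[OF p_pos] by blast
  moreover have root: "\<exists>\<mu>. z = zeta p ^ \<mu>" if "z \<in> ?S" for z
    using root_of_unity_eq_zeta_pow[OF p_pos] that by simp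
  then have "b - z \<in> ZK p" if "z \<in> ?S" for z
    using that assms(1) ZK_diff ZK_zeta_pow by blast
  moreover have "finite ?S"
    using card_roots_unity_eq[OF p_pos] p_pos by (metis card.infinite not_gr0)
  ultimately obtain z where "z \<in> ?S" "(b - z) ^ m z \<in> P"
    using assms(2) P_prod_imp_factor[of ?S "\<lambda>z. (b - z) ^ m z"] ZK_power by auto
  then show ?thesis using root P_power_imp \<open>\<And>z. z \<in> ?S \<Longrightarrow> b - z \<in> ZK p\<close> by blast
qed

definition residue_exp :: nat where
  "residue_exp = (ideal_norm p P - 1) div p"

lemma residue_pow_congruent_zeta_pow:
  assumes "a \<in> ZK p" and "a \<notin> P"
  shows "\<exists>\<mu>. a ^ residue_exp - zeta p ^ \<mu> \<in> P"
proof (cases "finite (carrier (ZK_ring p Quot P))")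
  case True
  then have "(a ^ residue_exp) ^ p - 1 \<in> P"
    using pow_norm_minus_one_in_P[OF True assms] p_dvd_norm_minus_one[OF True]
    by (simp add: residue_exp_def power_mult[symmetric])
  then show ?thesis by (rule congruent_zeta_pow_if_pth_power_one[OF ZK_power[OF assms(1)]])
next
  case False
  \<comment> \<open>\<open>ideal_norm\<close> is a cardinality, hence \<open>0\<close> for an infinite quotient\<close>
  then have "residue_exp = 0" by (simp add: residue_exp_def ideal_norm_def)
  then show ?thesis using P_zero by (intro exI[of _ 0]) simp
qed

lemma pres_eqI:
  assumes "a ^ residue_exp - zeta p ^ \<mu> \<in> P"
  shows "pres p P a = zeta p ^ \<mu>"
  unfolding pres_def
proof (rule the_equality)
  show "(\<exists>\<nu>. zeta p ^ \<mu> = zeta p ^ \<nu>) \<and> a ^ ((ideal_norm p P - 1) div p) - zeta p ^ \<mu> \<in> P"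
    using assms by (auto simp: residue_exp_def)
next
  fix w assume w: "(\<exists>\<nu>. w = zeta p ^ \<nu>) \<and> a ^ ((ideal_norm p P - 1) div p) - w \<in> P"
  then obtain \<nu> where "w = zeta p ^ \<nu>" "a ^ residue_exp - zeta p ^ \<nu> \<in> P"
    by (auto simp: residue_exp_def)
  moreover have "zeta p ^ \<nu> - zeta p ^ \<mu> = (a ^ residue_exp - zeta p ^ \<mu>) - (a ^ residue_exp - zeta p ^ \<nu>)"
    by simp
  ultimately show "w = zeta p ^ \<mu>" using assms P_diff zeta_pow_eq_if_diff_in_P by metis
qed

lemma pres_eq_zeta_pow:
  assumes "a \<in> ZK p" and "a \<notin> P"
  obtains \<mu> where "pres p P a = zeta p ^ \<mu>" and "a ^ residue_exp - zeta p ^ \<mu> \<in> P"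
  using residue_pow_congruent_zeta_pow[OF assms] pres_eqI by blast

lemma pres_mult:
  assumes "a \<in> ZK p" "a \<notin> P" and "b \<in> ZK p" "b \<notin> P"
  shows "pres p P (a * b) = pres p P a * pres p P b"
proof -
  obtain m where m: "pres p P a = zeta p ^ m" "a ^ residue_exp - zeta p ^ m \<in> P"
    using pres_eq_zeta_pow[OF assms(1,2)] .
  obtain n where n: "pres p P b = zeta p ^ n" "b ^ residue_exp - zeta p ^ n \<in> P"
    using pres_eq_zeta_pow[OF assms(3,4)] .
  have "(a * b) ^ residue_exp - zeta p ^ (m + n)
      = a ^ residue_exp * (b ^ residue_exp - zeta p ^ n) + zeta p ^ n * (a ^ residue_exp - zeta p ^ m)"
    by (simp add: algebra_simps power_add)
  also have "\<dots> \<in> P" using m(2) n(2) assms(1) by (intro P_add P_mult_left ZK_power ZK_zeta_pow)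
  finally have "pres p P (a * b) = zeta p ^ (m + n)" by (rule pres_eqI)
  then show ?thesis using m(1) n(1) by (simp add: power_add)
qed

lemma pres_cong:
  assumes "a \<in> ZK p" "a \<notin> P" and "b \<in> ZK p" and "a - b \<in> P"
  shows "pres p P a = pres p P b"
proof -
  obtain m where m: "pres p P a = zeta p ^ m" "a ^ residue_exp - zeta p ^ m \<in> P"
    using pres_eq_zeta_pow[OF assms(1,2)] .
  have "b ^ residue_exp - a ^ residue_exp \<in> P"
    using power_diff_in_P[OF assms(3,1) P_diff_commute[OF assms(4)]] .
  then have "b ^ residue_exp - zeta p ^ m \<in> P" using P_add[OF _ m(2)] by fastforce
  then show ?thesis using m(1) pres_eqI by simp
qed

lemma pres_pth_power:
  assumes "a \<in> ZK p" and "a ^ p \<notin> P"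
  shows "pres p P (a ^ p) = 1"
proof -
  have "a \<notin> P" using assms(2) P_power p_pos by blast
  then obtain m where "a ^ residue_exp - zeta p ^ m \<in> P"
    using pres_eq_zeta_pow[OF assms(1)] by blast
  then have "(a ^ residue_exp) ^ p - (zeta p ^ m) ^ p \<in> P"
    using assms(1) by (intro power_diff_in_P ZK_power ZK_zeta_pow)
  moreover have "(zeta p ^ m) ^ p = zeta p ^ 0"
    unfolding power_mult[symmetric] by (simp add: zeta_pow_eq_1)
  ultimately have "(a ^ p) ^ residue_exp - zeta p ^ 0 \<in> P"
    by (simp add: power_mult[symmetric] mult.commute)
  then show ?thesis using pres_eqI[of "a ^ p" 0] by simp
qed

lemma one_plus_zeta_notin_P: "1 + zeta p \<notin> P"
  using one_plus_zeta_pow_notin_P[of 1] p_gt_1 by (auto simp: dvd_imp_le)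

lemma one_plus_zeta_neq_0: "1 + zeta p \<noteq> 0"
  using one_plus_zeta_notin_P P_zero by auto

lemma cyclotomic_quotient_in_ZK: "(1 + zeta p ^ m) / (1 + zeta p) \<in> ZK p"
proof -
  obtain c where "1 + zeta p ^ m = (1 + zeta p) * (\<Sum>j<c. (- zeta p) ^ j)"
    using one_plus_zeta_pow_eq[OF odd_p] by blast
  then have "(1 + zeta p ^ m) / (1 + zeta p) = (\<Sum>j<c. (- zeta p) ^ j)"
    using one_plus_zeta_neq_0 by simp
  also have "\<dots> \<in> ZK p" by (intro ZK_sum ZK_power ZK_uminus ZK_zeta)
  finally show ?thesis .
qed

lemma cyclotomic_quotient_notin_P:
  assumes "\<not> p dvd m"
  shows "(1 + zeta p ^ m) / (1 + zeta p) \<notin> P"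
proof
  assume "(1 + zeta p ^ m) / (1 + zeta p) \<in> P"
  then have "(1 + zeta p) * ((1 + zeta p ^ m) / (1 + zeta p)) \<in> P"
    by (rule P_mult_left) (intro ZK_add ZK_one ZK_zeta)
  then show False using one_plus_zeta_pow_notin_P[OF assms] one_plus_zeta_neq_0 by simp
qed

lemma pres_zeta_half_mult_eps:
  assumes "\<not> p dvd k + 1"
  shows "pres p P (zeta_half p k) * pres p P (eps p (k + 1))
       = pres p P ((1 + zeta p ^ (k + 1)) / (1 + zeta p))"
proof -
  let ?E = "(1 + zeta p ^ (k + 1)) / (1 + zeta p)"
  have zh: "zeta_half p k \<in> ZK p" unfolding zeta_half_def by (rule ZK_zeta_pow)
  have eps: "eps p (k + 1) \<in> ZK p"
    unfolding eps_add_one_eq zeta_half_def inverse_zeta_pow[OF p_pos]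
    by (intro ZK_mult ZK_zeta_pow cyclotomic_quotient_in_ZK)
  have prod: "zeta_half p k * eps p (k + 1) = ?E"
  proof -
    have "zeta p ^ n \<noteq> 0" for n by (metis P_zero zeta_pow_notin_P)
    then show ?thesis unfolding eps_add_one_eq by (simp add: zeta_half_def)
  qed
  then have "zeta_half p k \<notin> P" "eps p (k + 1) \<notin> P"
    using cyclotomic_quotient_notin_P[OF assms] P_mult_left P_mult_right zh eps by metis+
  then show ?thesis using pres_mult zh eps prod by metis
qed

lemma int_sum_notin_P:
  assumes "of_int a * zeta p - of_int b \<in> P" and "coprime a b"
  shows "of_int a + of_int b \<notin> P"
proof
  assume sum: "of_int a + of_int b \<in> P"
  have "of_int a \<notin> P"
  proof
    assume a: "of_int a \<in> P"
    then have "of_int a * zeta p \<in> P" by (rule P_mult_right) (rule ZK_zeta)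
    then have "of_int a * zeta p - (of_int a * zeta p - of_int b) \<in> P"
      using assms(1) by (rule P_diff)
    then show False using coprime_int_notin_P[OF assms(2) a] by simp
  qed
  moreover have "of_int a * (1 + zeta p) \<in> P"
    using P_add[OF sum assms(1)] by (simp add: algebra_simps)
  ultimately show False
    using P_prime[OF ZK_of_int ZK_add[OF ZK_one ZK_zeta]] one_plus_zeta_notin_P by blast
qed

text \<open>Modulo \<open>P\<close> we have \<open>b \<equiv> a \<zeta>\<close>, hence \<open>a + \<zeta>\<^sup>k b \<equiv> a (1 + \<zeta>\<^bsup>k+1\<^esup>)\<close> and
  \<open>a + b \<equiv> a (1 + \<zeta>)\<close>.\<close>

lemma linear_form_congruent:
  assumes "of_int a * zeta p - of_int b \<in> P"
  shows "(of_int a + of_int b) * ((1 + zeta p ^ (k + 1)) / (1 + zeta p))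
           - (of_int a + zeta p ^ k * of_int b) \<in> P"
proof -
  define E where "E = (1 + zeta p ^ (k + 1)) / (1 + zeta p)"
  have E: "(1 + zeta p) * E = 1 + zeta p ^ (k + 1)" using one_plus_zeta_neq_0 by (simp add: E_def)
  have "(of_int a + of_int b) * E - (of_int a + zeta p ^ k * of_int b)
      = (zeta p ^ k - E) * (of_int a * zeta p - of_int b)
        + of_int a * ((1 + zeta p) * E - (1 + zeta p ^ (k + 1)))"
    by (simp add: algebra_simps)
  also have "\<dots> = (zeta p ^ k - E) * (of_int a * zeta p - of_int b)" by (simp add: E)
  also have "\<dots> \<in> P"
    using assms ZK_diff[OF ZK_zeta_pow cyclotomic_quotient_in_ZK] unfolding E_def by (rule P_mult_left)
  finally show ?thesis by (simp add: E_def)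
qed

lemma pres_linear_form:
  assumes "of_int a * zeta p - of_int b \<in> P" and "coprime a b" and "\<not> p dvd k + 1"
  shows "pres p P (of_int a + zeta p ^ k * of_int b)
       = pres p P (of_int a + of_int b) * (pres p P (zeta_half p k) * pres p P (eps p (k + 1)))"
proof -
  let ?E = "(1 + zeta p ^ (k + 1)) / (1 + zeta p)"
  have ab: "of_int a + of_int b \<in> ZK p" "of_int a + of_int b \<notin> P"
    using int_sum_notin_P[OF assms(1,2)] by (auto intro: ZK_add ZK_of_int)
  have E: "?E \<in> ZK p" "?E \<notin> P"
    using cyclotomic_quotient_in_ZK[of "k + 1"] cyclotomic_quotient_notin_P[OF assms(3)] by blast+
  have "(of_int a + of_int b) * ?E \<notin> P" using ab E P_prime by blast
  then have "pres p P (of_int a + zeta p ^ k * of_int b) = pres p P ((of_int a + of_int b) * ?E)"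
    using linear_form_congruent[OF assms(1)] ab(1) E(1)
    by (intro pres_cong[symmetric] ZK_mult ZK_add ZK_of_int ZK_zeta_pow)
  also have "\<dots> = pres p P (of_int a + of_int b) * pres p P ?E" using ab E by (rule pres_mult)
  finally show ?thesis using pres_zeta_half_mult_eps[OF assms(3)] by simp
qed

lemma pres_linear_form_if_sum_pth_power:
  assumes "of_int a * zeta p - of_int b \<in> P" and "coprime a b" and "\<not> p dvd k + 1"
    and "a + b = t ^ p"
  shows "pres p P (of_int a + zeta p ^ k * of_int b)
       = pres p P (zeta_half p k) * pres p P (eps p (k + 1))"
proof -
  have "of_int a + of_int b = (of_int t :: complex) ^ p"
    using arg_cong[OF assms(4), of "of_int :: int \<Rightarrow> complex"] by simp
  then have "pres p P (of_int a + of_int b) = 1"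
    using int_sum_notin_P[OF assms(1,2)] pres_pth_power[OF ZK_of_int] by simp
  then show ?thesis using pres_linear_form[OF assms(1-3)] by simp
qed

lemma pres_linear_form_if_p_times_sum_pth_power:
  assumes "of_int a * zeta p - of_int b \<in> P" and "coprime a b" and "\<not> p dvd k + 1"
    and "int p * (a + b) = t ^ p"
  shows "pres p P (of_int a + zeta p ^ k * of_int b) * pres p P (of_nat p)
       = pres p P (zeta_half p k) * pres p P (eps p (k + 1))"
proof -
  have ab: "of_int a + of_int b \<in> ZK p" "of_int a + of_int b \<notin> P"
    using int_sum_notin_P[OF assms(1,2)] by (auto intro: ZK_add ZK_of_int)
  have "of_nat p * (of_int a + of_int b) = (of_int t :: complex) ^ p"
    using arg_cong[OF assms(4), of "of_int :: int \<Rightarrow> complex"] by simp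
  moreover have "of_nat p * (of_int a + of_int b) \<notin> P"
    using P_prime[OF ZK_of_nat ab(1)] of_nat_p_notin_P ab(2) by blast
  ultimately have "pres p P (of_nat p * (of_int a + of_int b)) = 1"
    using pres_pth_power[OF ZK_of_int] by simp
  then have "pres p P (of_nat p) * pres p P (of_int a + of_int b) = 1"
    using pres_mult[OF ZK_of_nat of_nat_p_notin_P ab] by simp
  then show ?thesis using pres_linear_form[OF assms(1-3)] by (simp add: ac_simps)
qed

end

theorem lemma3p5:
  fixes p q k :: nat and x y z :: int and P :: "complex set"
  assumes "prime p" and "p > 3"
    and "x \<noteq> 0" and "y \<noteq> 0" and "z \<noteq> 0"
    and "coprime x y" and "coprime y z" and "coprime x z"
    and "x ^ p + y ^ p + z ^ p = 0"
    and "int p dvd y"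
    and "prime q" and "q \<noteq> p"
    and "primeideal P (ZK_ring p)" and "complex_of_nat q \<in> P"
    and "1 \<le> k" and "k \<le> p - 2"
  shows
    "(of_int x * zeta p - of_int y \<in> P \<longrightarrow>
       pres p P (of_int x + zeta p ^ k * of_int y)
         = pres p P (zeta_half p k) * pres p P (eps p (k + 1)))
   \<and> (of_int z * zeta p - of_int y \<in> P \<longrightarrow>
       pres p P (of_int z + zeta p ^ k * of_int y)
         = pres p P (zeta_half p k) * pres p P (eps p (k + 1)))
   \<and> (of_int x * zeta p - of_int z \<in> P \<longrightarrow>
       pres p P (of_int x + zeta p ^ k * of_int z) * pres p P (of_nat p)
         = pres p P (zeta_half p k) * pres p P (eps p (k + 1)))"
proof -
  have odd: "odd p" using assms(1,2) prime_odd_nat by simp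
  interpret prime_ideal_over_q p q P
    unfolding prime_ideal_over_q_def using assms odd by auto
  have k: "\<not> p dvd k + 1" using assms(2,15,16) by (auto dest: dvd_imp_le)
  have coprime_zy: "coprime z y" using assms(7) by (simp add: ac_simps)
  obtain t where "x + y = t ^ p"
    using fermat_eq_sum_is_pth_power[OF assms(1) odd assms(9,10,6)] by blast
  moreover obtain u where "z + y = u ^ p"
    using fermat_eq_sum_is_pth_power[OF assms(1) odd _ assms(10) coprime_zy] assms(9)
    by (metis add.commute add.left_commute)
  moreover obtain v where "int p * (x + z) = v ^ p"
    using fermat_eq_p_times_sum_is_pth_power[OF assms(1) odd _ assms(10,8,6)] assms(9)
    by (metis add.commute add.left_commute)
  ultimately show ?thesis
    using pres_linear_form_if_sum_pth_power[OF _ assms(6) k]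
      pres_linear_form_if_sum_pth_power[OF _ coprime_zy k]
      pres_linear_form_if_p_times_sum_pth_power[OF _ assms(8) k]
    by blast
qed

end
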